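(* Let $\mu$ be a probability measure on $\{0,1\}^{\mathbb{N}}$ and $X\sim\mu$. Define $\xi(i,j):=\mathbb{P}(X_i\neq X_j)$ and $\rho(i,j):=\frac{2}{\sqrt3}\wedge\sqrt{\frac{2}{\log\frac{2}{\xi(i,j)}}}$ for $i,j\in\mathbb{N}$, with $\rho(i,j)=0$ whenever $\xi(i,j)=0$. Then $\rho:\mathbb{N}^2\to\mathbb{R}_+$ satisfies the metric axioms.
   Context: $a\wedge b=\min\{a,b\}$. *)

theory Defs
  imports "HOL-Probability.Probability"
begin

definition xi :: "(nat \<Rightarrow> bool) measure \<Rightarrow> nat \<Rightarrow> nat \<Rightarrow> real" where
  "xi \<mu> i j = measure \<mu> {x \<in> space \<mu>. x i \<noteq> x j}"

definition rho :: "(nat \<Rightarrow> bool) measure \<Rightarrow> nat \<Rightarrow> nat \<Rightarrow> real" where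
  "rho \<mu> i j = (if xi \<mu> i j = 0 then 0
      else min (2 / sqrt 3) (sqrt (2 / ln (2 / xi \<mu> i j))))"

end

theory Submission
  imports Defs
begin

text \<open>The event \<open>X\<^sub>i \<noteq> X\<^sub>k\<close> lies in the union of \<open>X\<^sub>i \<noteq> X\<^sub>j\<close> and \<open>X\<^sub>j \<noteq> X\<^sub>k\<close>, so \<open>\<xi>\<close> is a
  pseudometric with values in \<open>[0, 1]\<close>. A function \<open>f\<close> with \<open>f 0 \<ge> 0\<close> which is nondecreasing
  and for which \<open>f x / x\<close> is nonincreasing is subadditive, hence turns such a pseudometric
  into a pseudometric. For \<open>\<rho>\<close> the ratio condition amounts to \<open>x\<^sup>2 ln (2 / x)\<close> being
  nondecreasing on \<open>(0, 1]\<close>; its derivative \<open>x (2 ln (2 / x) - 1)\<close> is nonnegative there since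
  \<open>ln 2 \<ge> 1/2\<close>. Capping by the constant \<open>2 / \<surd>3\<close> preserves both conditions.\<close>

lemma subadditive_if_mono_and_ratio_antimono:
  fixes f :: "real \<Rightarrow> real"
  assumes mono: "mono_on {0..r} f"
    and ratio: "\<And>x y. 0 < x \<Longrightarrow> x \<le> y \<Longrightarrow> y \<le> r \<Longrightarrow> x * f y \<le> y * f x"
    and "0 \<le> f 0"
    and "0 \<le> a" "0 \<le> b" "0 \<le> c" "a \<le> r" "b \<le> r" "c \<le> r" "c \<le> a + b"
  shows "f c \<le> f a + f b"
proof -
  have nonneg: "0 \<le> f x" if "0 \<le> x" "x \<le> r" for x
    using \<open>0 \<le> f 0\<close> mono_onD[OF mono, of 0 x] that by simp
  consider "a = 0" | "b = 0" | "0 < a" "0 < b"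
    using assms by linarith
  then show ?thesis
  proof cases
    case 1
    then show ?thesis
      using mono_onD[OF mono, of c b] assms by simp
  next
    case 2
    then show ?thesis
      using mono_onD[OF mono, of c a] assms by simp
  next
    case 3
    define s where "s = min (a + b) r"
    have s: "0 < s" "s \<le> r" "s \<le> a + b" "a \<le> s" "b \<le> s" "c \<le> s"
      using 3 assms by (auto simp: s_def)
    have "s * f s \<le> (a + b) * f s"
      using s nonneg[of s] by (simp add: mult_right_mono)
    also have "\<dots> = a * f s + b * f s"
      by (simp add: algebra_simps)
    also have "\<dots> \<le> s * f a + s * f b"
      using ratio[of a s] ratio[of b s] 3 s by simp
    finally have "s * f s \<le> s * (f a + f b)"
      by (simp add: distrib_left)
    then have "f s \<le> f a + f b"
      using s by simp
    moreover have "f c \<le> f s"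
      using mono_onD[OF mono, of c s] assms s by simp
    ultimately show ?thesis
      by simp
  qed
qed

lemma sq_mult_ln_two_div_mono:
  fixes x y :: real
  assumes "0 < x" "x \<le> y" "y \<le> 1"
  shows "x\<^sup>2 * ln (2 / x) \<le> y\<^sup>2 * ln (2 / y)"
proof (rule DERIV_nonneg_imp_nondecreasing[OF \<open>x \<le> y\<close>])
  fix t :: real
  assume "x \<le> t" "t \<le> y"
  with assms have t: "0 < t" "t \<le> 1"
    by auto
  have "ln 2 \<le> ln (2 / t)"
    using t by (simp add: le_divide_eq)
  then have "0 \<le> t * (2 * ln (2 / t) - 1)"
    using t ln2_ge_two_thirds by (intro mult_nonneg_nonneg) linarith+
  moreover have "((\<lambda>t. t\<^sup>2 * ln (2 / t)) has_real_derivative t * (2 * ln (2 / t) - 1)) (at t)"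
    using t by (auto intro!: derivative_eq_intros simp: field_simps power2_eq_square)
  ultimately show "\<exists>D. ((\<lambda>t. t\<^sup>2 * ln (2 / t)) has_real_derivative D) (at t) \<and> 0 \<le> D"
    by blast
qed

lemma sqrt_two_div_ln_ratio_antimono:
  fixes x y :: real
  assumes "0 < x" "x \<le> y" "y \<le> 1"
  shows "x * sqrt (2 / ln (2 / y)) \<le> y * sqrt (2 / ln (2 / x))"
proof -
  have "0 < ln (2 / x)" "0 < ln (2 / y)"
    using assms by (simp_all add: less_divide_eq)
  then have "x\<^sup>2 * (2 / ln (2 / y)) \<le> y\<^sup>2 * (2 / ln (2 / x))"
    using sq_mult_ln_two_div_mono[OF assms] by (simp add: field_simps)
  then have "sqrt (x\<^sup>2) * sqrt (2 / ln (2 / y)) \<le> sqrt (y\<^sup>2) * sqrt (2 / ln (2 / x))"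
    by (simp only: real_sqrt_mult [symmetric] real_sqrt_le_iff)
  then show ?thesis
    using assms by simp
qed

definition rho_of :: "real \<Rightarrow> real" where
  "rho_of c = (if c = 0 then 0 else min (2 / sqrt 3) (sqrt (2 / ln (2 / c))))"

lemma rho_eq_rho_of_xi: "rho \<mu> i j = rho_of (xi \<mu> i j)"
  by (simp add: rho_def rho_of_def)

lemma rho_of_nonneg: "0 \<le> c \<Longrightarrow> c \<le> 1 \<Longrightarrow> 0 \<le> rho_of c"
  by (simp add: rho_of_def less_divide_eq)

lemma rho_of_mono: "mono_on {0..1} rho_of"
proof (rule mono_onI)
  fix x y :: real
  assume "x \<in> {0..1}" "y \<in> {0..1}" "x \<le> y"
  then have xy: "0 \<le> x" "x \<le> y" "y \<le> 1"
    by auto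
  show "rho_of x \<le> rho_of y"
  proof (cases "x = 0")
    case True
    then show ?thesis
      using rho_of_nonneg[of y] xy by (simp add: rho_of_def)
  next
    case False
    then have "0 < ln (2 / y)" "ln (2 / y) \<le> ln (2 / x)"
      using xy by (simp_all add: less_divide_eq frac_le)
    then have "sqrt (2 / ln (2 / x)) \<le> sqrt (2 / ln (2 / y))"
      by (simp add: frac_le)
    then have "min (2 / sqrt 3) (sqrt (2 / ln (2 / x))) \<le> min (2 / sqrt 3) (sqrt (2 / ln (2 / y)))"
      by (rule min.mono[OF order_refl])
    then show ?thesis
      using False xy by (simp add: rho_of_def)
  qed
qed

lemma rho_of_ratio_antimono:
  fixes x y :: real
  assumes "0 < x" "x \<le> y" "y \<le> 1"
  shows "x * rho_of y \<le> y * rho_of x"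
proof -
  have "x * min (2 / sqrt 3) (sqrt (2 / ln (2 / y)))
      = min (x * (2 / sqrt 3)) (x * sqrt (2 / ln (2 / y)))"
    using assms by (simp add: min_mult_distrib_left)
  also have "\<dots> \<le> min (y * (2 / sqrt 3)) (y * sqrt (2 / ln (2 / x)))"
    using assms sqrt_two_div_ln_ratio_antimono[OF assms]
    by (intro min.mono mult_right_mono) auto
  also have "\<dots> = y * min (2 / sqrt 3) (sqrt (2 / ln (2 / x)))"
    using assms by (simp add: min_mult_distrib_left)
  finally show ?thesis
    using assms by (simp add: rho_of_def)
qed

lemma xi_nonneg: "0 \<le> xi \<mu> i j"
  by (simp add: xi_def)

lemma xi_le_1: "prob_space \<mu> \<Longrightarrow> xi \<mu> i j \<le> 1"
  by (simp add: xi_def prob_space.prob_le_1)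

lemma xi_self: "xi \<mu> i i = 0"
  by (simp add: xi_def)

lemma xi_commute: "xi \<mu> i j = xi \<mu> j i"
  unfolding xi_def by metis

lemma xi_triangle:
  assumes "finite_measure \<mu>" and "\<And>i. (\<lambda>x. x i) \<in> \<mu> \<rightarrow>\<^sub>M count_space UNIV"
  shows "xi \<mu> i k \<le> xi \<mu> i j + xi \<mu> j k"
proof -
  have events: "{x \<in> space \<mu>. x i \<noteq> x j} \<in> sets \<mu>" for i j
    using assms(2)[of i] assms(2)[of j] by measurable
  have "xi \<mu> i k \<le> measure \<mu> ({x \<in> space \<mu>. x i \<noteq> x j} \<union> {x \<in> space \<mu>. x j \<noteq> x k})"
    unfolding xi_def by (rule finite_measure.finite_measure_mono[OF assms(1)]) (use events in auto)
  also have "\<dots> \<le> xi \<mu> i j + xi \<mu> j k"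
    unfolding xi_def by (rule measure_subadditive)
      (use events finite_measure.emeasure_finite[OF assms(1)] in auto)
  finally show ?thesis .
qed

theorem lemma18:
  fixes \<mu> :: "(nat \<Rightarrow> bool) measure"
  assumes "prob_space \<mu>"
    and "sets \<mu> = sets (Pi\<^sub>M UNIV (\<lambda>_::nat. count_space (UNIV :: bool set)))"
  shows "(\<forall>i j. 0 \<le> rho \<mu> i j)
       \<and> (\<forall>i. rho \<mu> i i = 0)
       \<and> (\<forall>i j. rho \<mu> i j = rho \<mu> j i)
       \<and> (\<forall>i j k. rho \<mu> i k \<le> rho \<mu> i j + rho \<mu> j k)"
proof -
  have "finite_measure \<mu>"
    using assms(1) by (simp add: prob_space_def)
  moreover have "(\<lambda>x. x i) \<in> \<mu> \<rightarrow>\<^sub>M count_space UNIV" for i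
    by (subst measurable_cong_sets[OF assms(2) refl]) simp
  ultimately have "rho_of (xi \<mu> i k) \<le> rho_of (xi \<mu> i j) + rho_of (xi \<mu> j k)" for i j k
    by (intro subadditive_if_mono_and_ratio_antimono[OF rho_of_mono rho_of_ratio_antimono]
        xi_nonneg xi_le_1[OF assms(1)] xi_triangle) (simp_all add: rho_of_def)
  moreover have "rho_of (xi \<mu> i i) = 0" for i
    by (simp add: xi_self rho_of_def)
  moreover have "rho_of (xi \<mu> i j) = rho_of (xi \<mu> j i)" for i j
    by (metis xi_commute)
  ultimately show ?thesis
    unfolding rho_eq_rho_of_xi using rho_of_nonneg[OF xi_nonneg xi_le_1[OF assms(1)]] by blast
qed

end
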